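(* With all notation and hypotheses as below, for every $(A_0,\dots,A_N)\in(X^* )^{N+1}$ and $(B_0,\dots,B_N)\in X^{N+1}$, define $C_0=u_NA_N$, $C_{N-i}-C_{N-i-1}=u_i(A_i-A_{i+1})$ for $i=0,\dots,N-1$ (with $A_{N+1}=0$), and $D_i=B_{N-i}$ for $i=0,\dots,N$. Then \[ \mathbf{U}_{\mathcal A}(A_0,\dots,A_N,B_0,\dots,B_N)=\mathbf{V}_{\mathcal B}(C_0,\dots,C_N,D_0,\dots,D_N), \] and the map $(A,B)\mapsto(C,D)$ is a bijection of $(X^* )^{N+1}\times X^{N+1}$ onto itself.
   Context: $X$ is a reflexive Banach space with norm $\|\cdot\|$, dual $X^*$ with dual norm $\|\cdot\|_*$ and pairing $\langle\cdot,\cdot\rangle$; $L>0$, $\sigma>0$, $N\ge1$; coefficients $\{a_{k,i}\}_{0\le i<k\le N}$, $\{b_{k,i}\}_{0\le i\le k\le N}$ are real with convention $b_{0,0}=-1$; $\{u_i\}_{i=0}^N$ is a positive nondecreasing real sequence and $v_i=1/u_{N-i}$. For $(A,B)$: $A_{N+1}=0$, $x_0=B_0$, $x_{k+1}=x_k-\sum_{i=0}^{k+1}b_{k+1,i}B_i$, and $\mathbf{U}_{\mathcal A}=\sum_{k=0}^{N-1}\frac{u_k}{2L}\|A_k-A_{k+1}\|_*^2+\sum_{k=0}^{N-1}\frac{\sigma}{2}\|B_k-B_{k+1}\|^2+\sum_{k=0}^{N-1}\langle\sum_{i=0}^{k}a_{k+1,i}A_i,B_{k+1}\rangle-\sum_{k=0}^{N}u_k\langle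 A_k-A_{k+1},x_k\rangle$. For $(C,D)$: $\mathbf{V}_{\mathcal B}=\sum_{k=0}^{N-1}\frac{v_{k+1}}{2L}\|C_k-C_{k+1}\|_*^2+\sum_{k=0}^{N-1}\frac{\sigma}{2}\|D_k-D_{k+1}\|^2+\sum_{k=0}^{N}\langle\sum_{i=0}^{k}b_{N-i,N-k}C_i,D_k\rangle+\sum_{k=0}^{N-1}\langle v_{k+1}C_{k+1}-\sum_{j=0}^{k}(v_{j+1}-v_j)C_j,\sum_{i=0}^{k}a_{N-i,N-1-k}D_i\rangle$. *)

theory Defs
  imports "HOL-Analysis.Analysis"
begin

text \<open>The dual space X* is modelled as the space of bounded linear functionals
  'x \<Rightarrow>L real with the operator norm (= dual norm); the pairing is application.\<close>

definition canon_embed :: "'x::real_normed_vector \<Rightarrow> (('x \<Rightarrow>\<^sub>L real) \<Rightarrow>\<^sub>L real)" where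
  "canon_embed x = Blinfun (\<lambda>f. blinfun_apply f x)"

definition reflexive_space :: "'x::real_normed_vector itself \<Rightarrow> bool" where
  "reflexive_space _ = surj (canon_embed :: 'x \<Rightarrow> _)"

definition pair :: "('x::real_normed_vector \<Rightarrow>\<^sub>L real) \<Rightarrow> 'x \<Rightarrow> real" where
  "pair f x = blinfun_apply f x"

fun xseq :: "(nat \<Rightarrow> nat \<Rightarrow> real) \<Rightarrow> (nat \<Rightarrow> 'x::real_normed_vector) \<Rightarrow> nat \<Rightarrow> 'x" where
  "xseq b B 0 = B 0"
| "xseq b B (Suc k) = xseq b B k - (\<Sum>i=0..Suc k. b (Suc k) i *\<^sub>R B i)"

definition vseq :: "(nat \<Rightarrow> real) \<Rightarrow> nat \<Rightarrow> nat \<Rightarrow> real" where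
  "vseq u N i = 1 / u (N - i)"

text \<open>Tuples indexed by {0..N}, represented by functions vanishing beyond N.\<close>
definition tuples :: "nat \<Rightarrow> ((nat \<Rightarrow> ('x::real_normed_vector \<Rightarrow>\<^sub>L real)) \<times> (nat \<Rightarrow> 'x)) set" where
  "tuples N = {(A, B). (\<forall>i>N. A i = 0) \<and> (\<forall>i>N. B i = 0)}"

definition UA :: "(nat \<Rightarrow> nat \<Rightarrow> real) \<Rightarrow> (nat \<Rightarrow> nat \<Rightarrow> real) \<Rightarrow> (nat \<Rightarrow> real) \<Rightarrow> real \<Rightarrow> real \<Rightarrow> nat
   \<Rightarrow> (nat \<Rightarrow> ('x::real_normed_vector \<Rightarrow>\<^sub>L real)) \<Rightarrow> (nat \<Rightarrow> 'x) \<Rightarrow> real" where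
  "UA a b u L \<sigma> N A B =
     (\<Sum>k<N. u k / (2 * L) * (norm (A k - A (Suc k)))\<^sup>2)
   + (\<Sum>k<N. \<sigma> / 2 * (norm (B k - B (Suc k)))\<^sup>2)
   + (\<Sum>k<N. pair (\<Sum>i=0..k. a (Suc k) i *\<^sub>R A i) (B (Suc k)))
   - (\<Sum>k=0..N. u k * pair (A k - A (Suc k)) (xseq b B k))"

definition VB :: "(nat \<Rightarrow> nat \<Rightarrow> real) \<Rightarrow> (nat \<Rightarrow> nat \<Rightarrow> real) \<Rightarrow> (nat \<Rightarrow> real) \<Rightarrow> real \<Rightarrow> real \<Rightarrow> nat
   \<Rightarrow> (nat \<Rightarrow> ('x::real_normed_vector \<Rightarrow>\<^sub>L real)) \<Rightarrow> (nat \<Rightarrow> 'x) \<Rightarrow> real" where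
  "VB a b u L \<sigma> N C D =
     (let v = vseq u N in
     (\<Sum>k<N. v (Suc k) / (2 * L) * (norm (C k - C (Suc k)))\<^sup>2)
   + (\<Sum>k<N. \<sigma> / 2 * (norm (D k - D (Suc k)))\<^sup>2)
   + (\<Sum>k=0..N. pair (\<Sum>i=0..k. b (N - i) (N - k) *\<^sub>R C i) (D k))
   + (\<Sum>k<N. pair (v (Suc k) *\<^sub>R C (Suc k) - (\<Sum>j=0..k. (v (Suc j) - v j) *\<^sub>R C j))
                   (\<Sum>i=0..k. a (N - i) (N - 1 - k) *\<^sub>R D i)))"

fun Crec :: "(nat \<Rightarrow> real) \<Rightarrow> nat \<Rightarrow> (nat \<Rightarrow> ('x::real_normed_vector \<Rightarrow>\<^sub>L real)) \<Rightarrow> nat \<Rightarrow> ('x \<Rightarrow>\<^sub>L real)" where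
  "Crec u N A 0 = u N *\<^sub>R A N"
| "Crec u N A (Suc j) = Crec u N A j + u (N - Suc j) *\<^sub>R (A (N - Suc j) - A (N - j))"

definition ABtoCD :: "(nat \<Rightarrow> real) \<Rightarrow> nat
   \<Rightarrow> (nat \<Rightarrow> ('x::real_normed_vector \<Rightarrow>\<^sub>L real)) \<times> (nat \<Rightarrow> 'x)
   \<Rightarrow> (nat \<Rightarrow> ('x \<Rightarrow>\<^sub>L real)) \<times> (nat \<Rightarrow> 'x)" where
  "ABtoCD u N AB =
     ((\<lambda>i. if i \<le> N then Crec u N (fst AB) i else 0),
      (\<lambda>i. if i \<le> N then snd AB (N - i) else 0))"

end

theory Submission
  imports Defs
begin

text \<open>The map A \<mapsto> C is a summation by parts: C_j = \<Sum>_{m \<ge> N-j} u_m (A_m - A_{m+1}), so the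
  increments of C are those of A, rescaled by u and reversed in time, and the v-weighted Abel sum
  v_{k+1} C_{k+1} - \<Sum>_{j \<le> k} (v_{j+1} - v_j) C_j telescopes back to A_{N-k-1}. After reversing the
  summation index, the quadratic terms of V and U then agree term by term, the a-couplings agree
  after swapping a double sum, and the b-coupling of V equals the last sum of U once x_k is expanded
  as -\<Sum>_{l \<le> k} \<Sum>_{i \<le> l} b_{l,i} B_i and the triple sum over i \<le> l \<le> k is reordered.
  The map is bijective because the recursion for C can be solved backwards for A.\<close>

lemma sum_triangle_swap:
  fixes f :: "nat \<Rightarrow> nat \<Rightarrow> 'a::comm_monoid_add"
  shows "(\<Sum>m=0..n. \<Sum>q=0..m. f m q) = (\<Sum>q=0..n. \<Sum>m=q..n. f m q)"
  by (induction n) (simp_all add: sum.distrib)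

lemma xseq_eq_neg_partial_sums:
  assumes "b 0 0 = -1"
  shows "xseq b B k = - (\<Sum>l=0..k. \<Sum>i=0..l. b l i *\<^sub>R B i)"
  by (induction k) (simp_all add: assms)

lemma Crec_eq_tail_sum:
  assumes "A (Suc N) = 0" and "j \<le> N"
  shows "Crec u N A j = (\<Sum>m=N-j..N. u m *\<^sub>R (A m - A (Suc m)))"
  using assms(2)
proof (induction j)
  case 0
  then show ?case using assms(1) by simp
next
  case (Suc j)
  then have "N - j = Suc (N - Suc j)" by simp
  then show ?case using Suc by (simp add: sum.atLeast_Suc_atMost)
qed

lemma vseq_weighted_Crec_eq:
  assumes "\<And>i. i \<le> N \<Longrightarrow> u i \<noteq> 0" and "k < N"
  shows "vseq u N (Suc k) *\<^sub>R Crec u N A (Suc k) - (\<Sum>j=0..k. (vseq u N (Suc j) - vseq u N j) *\<^sub>R Crec u N A j)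
    = A (N - Suc k)"
  using assms(2)
proof (induction k)
  case 0
  then show ?case using assms(1)[of N] assms(1)[of "N - 1"]
    by (simp add: vseq_def algebra_simps)
next
  case (Suc k)
  then have "N - Suc k = Suc (N - Suc (Suc k))" by simp
  then show ?case using Suc assms(1)[of "N - Suc (Suc k)"]
    by (simp add: vseq_def algebra_simps)
qed

lemma dual_quadratic_terms_Crec:
  assumes "\<And>i. i \<le> N \<Longrightarrow> u i \<noteq> 0"
  shows "(\<Sum>k<N. vseq u N (Suc k) / (2 * L) * (norm (Crec u N A k - Crec u N A (Suc k)))\<^sup>2)
    = (\<Sum>k<N. u k / (2 * L) * (norm (A k - A (Suc k)))\<^sup>2)" (is "_ = ?rhs")
proof -
  have "vseq u N (Suc k) / (2 * L) * (norm (Crec u N A k - Crec u N A (Suc k)))\<^sup>2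
      = u (N - Suc k) / (2 * L) * (norm (A (N - Suc k) - A (Suc (N - Suc k))))\<^sup>2" if "k < N" for k
  proof -
    have "(norm (Crec u N A k - Crec u N A (Suc k)))\<^sup>2
        = (u (N - Suc k))\<^sup>2 * (norm (A (N - Suc k) - A (Suc (N - Suc k))))\<^sup>2"
      using that by (simp add: Suc_diff_Suc norm_minus_commute power_mult_distrib)
    then show ?thesis
      using assms[of "N - Suc k"] by (simp add: vseq_def power2_eq_square)
  qed
  then have "(\<Sum>k<N. vseq u N (Suc k) / (2 * L) * (norm (Crec u N A k - Crec u N A (Suc k)))\<^sup>2)
      = (\<Sum>k<N. (\<lambda>i. u i / (2 * L) * (norm (A i - A (Suc i)))\<^sup>2) (N - Suc k))"
    by (intro sum.cong) simp_all
  also have "\<dots> = ?rhs"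
    by (rule sum.nat_diff_reindex)
  finally show ?thesis .
qed

lemma primal_quadratic_terms_reversed:
  "(\<Sum>k<N. \<sigma> / 2 * (norm (B (N - k) - B (N - Suc k)))\<^sup>2) = (\<Sum>k<N. \<sigma> / 2 * (norm (B k - B (Suc k)))\<^sup>2)"
  (is "_ = ?rhs")
proof -
  have "norm (B (N - k) - B (N - Suc k)) = norm (B (N - Suc k) - B (Suc (N - Suc k)))" if "k < N" for k
    using that by (simp add: Suc_diff_Suc norm_minus_commute)
  then have "(\<Sum>k<N. \<sigma> / 2 * (norm (B (N - k) - B (N - Suc k)))\<^sup>2)
      = (\<Sum>k<N. (\<lambda>i. \<sigma> / 2 * (norm (B i - B (Suc i)))\<^sup>2) (N - Suc k))"
    by (intro sum.cong) simp_all
  also have "\<dots> = ?rhs"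
    by (rule sum.nat_diff_reindex)
  finally show ?thesis .
qed

lemma coupling_a_terms_reversed:
  assumes "\<And>i. i \<le> N \<Longrightarrow> u i \<noteq> 0"
  shows "(\<Sum>k<N. pair (vseq u N (Suc k) *\<^sub>R Crec u N A (Suc k)
                         - (\<Sum>j=0..k. (vseq u N (Suc j) - vseq u N j) *\<^sub>R Crec u N A j))
                   (\<Sum>i=0..k. a (N - i) (N - 1 - k) *\<^sub>R B (N - i)))
    = (\<Sum>k<N. pair (\<Sum>i=0..k. a (Suc k) i *\<^sub>R A i) (B (Suc k)))"
  (is "?lhs = _")
proof -
  have "?lhs = (\<Sum>k<N. (\<lambda>m. \<Sum>i=0..N - Suc m. a (N - i) m * blinfun_apply (A m) (B (N - i))) (N - Suc k))"
    using vseq_weighted_Crec_eq[of N u _ A] assms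
    by (intro sum.cong) (simp_all del: Crec.simps add: pair_def blinfun.sum_right blinfun.scaleR_right)
  also have "\<dots> = (\<Sum>m<N. \<Sum>i=0..N - Suc m. a (N - i) m * blinfun_apply (A m) (B (N - i)))"
    by (rule sum.nat_diff_reindex)
  also have "\<dots> = (\<Sum>m<N. \<Sum>j=Suc m..N. a j m * blinfun_apply (A m) (B j))"
    by (intro sum.cong refl sum.reindex_bij_witness[where i="\<lambda>i. N - i" and j="\<lambda>i. N - i"]) auto
  also have "\<dots> = (\<Sum>j\<le>N. \<Sum>m<j. a j m * blinfun_apply (A m) (B j))"
    by (rule sum.nested_swap'[symmetric])
  also have "\<dots> = (\<Sum>k<N. pair (\<Sum>i=0..k. a (Suc k) i *\<^sub>R A i) (B (Suc k)))"
    by (simp add: sum.atMost_shift lessThan_Suc_atMost atLeast0AtMost pair_def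
        blinfun.add_left blinfun.sum_left blinfun.scaleR_left)
  finally show ?thesis .
qed

lemma coupling_b_terms_reversed:
  assumes "A (Suc N) = 0" and "b 0 0 = -1"
  shows "(\<Sum>k=0..N. pair (\<Sum>i=0..k. b (N - i) (N - k) *\<^sub>R Crec u N A i) (B (N - k)))
    = - (\<Sum>k=0..N. u k * pair (A k - A (Suc k)) (xseq b B k))"
  (is "?lhs = _")
proof -
  define P where "P m p = u m * pair (A m - A (Suc m)) (B p)" for m p
  have "?lhs = (\<Sum>k=0..N. (\<lambda>p. \<Sum>i=0..N - p. \<Sum>m=N - i..N. b (N - i) p * P m p) (N - k))"
    using Crec_eq_tail_sum[where A=A and N=N, OF assms(1)]
    by (intro sum.cong) (simp_all add: P_def pair_def blinfun.sum_left blinfun.scaleR_left sum_distrib_left)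
  also have "\<dots> = (\<Sum>p=0..N. \<Sum>i=0..N - p. \<Sum>m=N - i..N. b (N - i) p * P m p)"
    by (rule sum.atLeastAtMost_rev[symmetric, where n=0, simplified])
  also have "\<dots> = (\<Sum>p=0..N. \<Sum>q=p..N. \<Sum>m=q..N. b q p * P m p)"
    by (intro sum.cong refl sum.reindex_bij_witness[where i="\<lambda>i. N - i" and j="\<lambda>i. N - i"]) auto
  also have "\<dots> = (\<Sum>q=0..N. \<Sum>p=0..q. \<Sum>m=q..N. b q p * P m p)"
    by (rule sum_triangle_swap[symmetric])
  also have "\<dots> = (\<Sum>q=0..N. \<Sum>m=q..N. \<Sum>p=0..q. b q p * P m p)"
    by (simp only: sum.swap[where A="{0.._}"])
  also have "\<dots> = (\<Sum>m=0..N. \<Sum>q=0..m. \<Sum>p=0..q. b q p * P m p)"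
    by (rule sum_triangle_swap[symmetric])
  also have "\<dots> = - (\<Sum>k=0..N. u k * pair (A k - A (Suc k)) (xseq b B k))"
    by (simp add: xseq_eq_neg_partial_sums[where b=b, OF assms(2)] P_def pair_def blinfun.sum_right
        blinfun.scaleR_right blinfun.minus_right sum_distrib_left sum_negf algebra_simps)
  finally show ?thesis .
qed

lemma VB_cong:
  assumes "\<And>i. i \<le> N \<Longrightarrow> C i = C' i" and "\<And>i. i \<le> N \<Longrightarrow> D i = D' i"
  shows "VB a b u L \<sigma> N C D = VB a b u L \<sigma> N C' D'"
  unfolding VB_def Let_def using assms by (intro arg_cong2[where f="(+)"] sum.cong) auto

lemma UA_eq_VB_ABtoCD:
  assumes "(A, B) \<in> tuples N" and "b 0 0 = -1" and "\<And>i. i \<le> N \<Longrightarrow> u i \<noteq> 0"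
  shows "UA a b u L \<sigma> N A B = VB a b u L \<sigma> N (fst (ABtoCD u N (A, B))) (snd (ABtoCD u N (A, B)))"
proof -
  have "A (Suc N) = 0" using assms(1) by (simp add: tuples_def)
  have "VB a b u L \<sigma> N (fst (ABtoCD u N (A, B))) (snd (ABtoCD u N (A, B)))
      = VB a b u L \<sigma> N (Crec u N A) (\<lambda>i. B (N - i))"
    by (rule VB_cong) (simp_all add: ABtoCD_def)
  also have "\<dots> = UA a b u L \<sigma> N A B"
    unfolding UA_def VB_def Let_def
    using dual_quadratic_terms_Crec[of N u L A, OF assms(3)] primal_quadratic_terms_reversed[of \<sigma> B N]
      coupling_a_terms_reversed[of N u A a B, OF assms(3)]
      coupling_b_terms_reversed[of A N b u B, OF \<open>A (Suc N) = 0\<close> assms(2)]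
    by simp
  finally show ?thesis by (rule sym)
qed

fun Arec :: "(nat \<Rightarrow> real) \<Rightarrow> nat \<Rightarrow> (nat \<Rightarrow> 'a::real_vector) \<Rightarrow> nat \<Rightarrow> 'a" where
  "Arec u N C 0 = (1 / u N) *\<^sub>R C 0"
| "Arec u N C (Suc j) = Arec u N C j + (1 / u (N - Suc j)) *\<^sub>R (C (Suc j) - C j)"

definition CDtoAB :: "(nat \<Rightarrow> real) \<Rightarrow> nat
   \<Rightarrow> (nat \<Rightarrow> ('x::real_normed_vector \<Rightarrow>\<^sub>L real)) \<times> (nat \<Rightarrow> 'x)
   \<Rightarrow> (nat \<Rightarrow> ('x \<Rightarrow>\<^sub>L real)) \<times> (nat \<Rightarrow> 'x)" where
  "CDtoAB u N CD =
     ((\<lambda>i. if i \<le> N then Arec u N (fst CD) (N - i) else 0),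
      (\<lambda>i. if i \<le> N then snd CD (N - i) else 0))"

lemma Arec_Crec:
  assumes "\<And>i. i \<le> N \<Longrightarrow> u i \<noteq> 0" and "\<And>i. i \<le> N \<Longrightarrow> C i = Crec u N A i" and "j \<le> N"
  shows "Arec u N C j = A (N - j)"
  using assms(3)
proof (induction j)
  case 0
  then show ?case using assms(1)[of N] assms(2)[of 0] by simp
next
  case (Suc j)
  then have "N - j = Suc (N - Suc j)" by simp
  then show ?case using Suc assms(1)[of "N - Suc j"] assms(2)[of j] assms(2)[of "Suc j"]
    by (simp add: scaleR_diff_right)
qed

lemma Crec_Arec:
  assumes "\<And>i. i \<le> N \<Longrightarrow> u i \<noteq> 0" and "\<And>i. i \<le> N \<Longrightarrow> A i = Arec u N C (N - i)" and "j \<le> N"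
  shows "Crec u N A j = C j"
  using assms(3)
proof (induction j)
  case 0
  then show ?case using assms(1)[of N] assms(2)[of N] by simp
next
  case (Suc j)
  then have "N - (N - Suc j) = Suc j" "N - (N - j) = j" by auto
  then show ?case using Suc assms(1)[of "N - Suc j"] assms(2)[of "N - Suc j"] assms(2)[of "N - j"]
    by (simp add: scaleR_diff_right)
qed

lemma bij_betw_ABtoCD:
  assumes "\<And>i. i \<le> N \<Longrightarrow> u i \<noteq> 0"
  shows "bij_betw (ABtoCD u N) (tuples N) (tuples N)"
proof (rule bij_betw_byWitness[where f'="CDtoAB u N"])
  show "\<forall>AB\<in>tuples N. CDtoAB u N (ABtoCD u N AB) = AB"
  proof clarify
    fix A B assume AB: "(A, B) \<in> tuples N"
    let ?C = "fst (ABtoCD u N (A, B))"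
    have "Arec u N ?C (N - i) = A i" if "i \<le> N" for i
      using Arec_Crec[of N u ?C A "N - i"] assms that by (simp add: ABtoCD_def)
    then show "CDtoAB u N (ABtoCD u N (A, B)) = (A, B)"
      using AB by (simp add: CDtoAB_def tuples_def fun_eq_iff) (simp add: ABtoCD_def)
  qed
  show "\<forall>CD\<in>tuples N. ABtoCD u N (CDtoAB u N CD) = CD"
  proof clarify
    fix C D assume CD: "(C, D) \<in> tuples N"
    let ?A = "fst (CDtoAB u N (C, D))"
    have "Crec u N ?A i = C i" if "i \<le> N" for i
      using Crec_Arec[of N u ?A C i] assms that by (simp add: CDtoAB_def)
    then show "ABtoCD u N (CDtoAB u N (C, D)) = (C, D)"
      using CD by (simp add: ABtoCD_def tuples_def fun_eq_iff) (simp add: CDtoAB_def)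
  qed
  show "ABtoCD u N ` tuples N \<subseteq> tuples N" "CDtoAB u N ` tuples N \<subseteq> tuples N"
    by (auto simp: ABtoCD_def CDtoAB_def tuples_def)
qed

theorem mainTheorem3:
  fixes a b :: "nat \<Rightarrow> nat \<Rightarrow> real" and u :: "nat \<Rightarrow> real"
    and L \<sigma> :: real and N :: nat
  assumes "reflexive_space TYPE('x::banach)"
    and "L > 0" and "\<sigma> > 0" and "N \<ge> 1"
    and "b 0 0 = -1"
    and "\<And>i. i \<le> N \<Longrightarrow> u i > 0"
    and "\<And>i j. i \<le> j \<Longrightarrow> j \<le> N \<Longrightarrow> u i \<le> u j"
  shows "(\<forall>A B. (A, B) \<in> (tuples N :: ((nat \<Rightarrow> ('x \<Rightarrow>\<^sub>L real)) \<times> (nat \<Rightarrow> 'x)) set) \<longrightarrow>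
            UA a b u L \<sigma> N A B = VB a b u L \<sigma> N (fst (ABtoCD u N (A, B))) (snd (ABtoCD u N (A, B))))
       \<and> bij_betw (ABtoCD u N) (tuples N :: ((nat \<Rightarrow> ('x \<Rightarrow>\<^sub>L real)) \<times> (nat \<Rightarrow> 'x)) set) (tuples N)"
proof -
  \<comment> \<open>The identity is purely algebraic: only \<open>b 0 0 = -1\<close> and \<open>u i \<noteq> 0\<close> on \<open>{0..N}\<close> are used.\<close>
  have u_nonzero: "\<And>i. i \<le> N \<Longrightarrow> u i \<noteq> 0"
    using assms(6) by force
  show ?thesis
    using UA_eq_VB_ABtoCD[where b=b and u=u and N=N, OF _ assms(5) u_nonzero]
      bij_betw_ABtoCD[where u=u and N=N, OF u_nonzero] by blast
qed

end
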